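(* Let $\mathcal{C}$ be a binary linear block code of length $n$, BPSK-modulated and transmitted over an AWGN channel as described in the context, with the all-zero codeword transmitted, and let $E$ be the maximum-likelihood decoding error event. Let $\{\mathcal{R}(r), r\in\mathcal{I}\subseteq\mathbb{R}\}$ be a family of regions satisfying assumptions A1–A3 of the context, with induced random variable $R$ having pdf $g(r)$ (extended by $g(r)\equiv 0$ for $r\notin\mathcal{I}$), and let $f_u(r)$ be an upper bound on ${\rm Pr}\{E\mid \underline y\in\partial\mathcal{R}(r)\}$ that is measurable with respect to $g$. Then for any $r^*\in\mathbb{R}$, $$ {\rm Pr}\{E\} \le \int_{-\infty}^{r^*} f_u(r)g(r)\,{\rm d}r + \int_{r^*}^{+\infty} g(r)\,{\rm d}r. $$
   Context: System model: $\mathcal{C}[n,k,d_{\min}]$ is a binary linear code. A codeword $\underline c=(c_0,\dots,c_{n-1})$ is mapped to $\underline s$ with $s_t=1-2c_t$, and $\underline y=\underline s+\underline z$ is received, where $\underline z$ has i.i.d. zero-mean Gaussian components of variance $\sigma^2$. ML decoding chooses the signal vector nearest to $\underline y$ in Euclidean distance. The bipolar image $\underline s^{(0)}$ of the all-zero codeword is transmitted; $E$ denotes the decoding error event. Assumptions: (A1) The regions are nested and their boundaries partition $\mathbb{R}^n$: $\mathcal{R}(r_1)\subset\mathcal{R}(r_2)$ if $r_1<r_2$; $\partial\mathcal{R}(r_1)\cap\partial\mathcal{R}(r_2)=\emptyset$ if $r_1\ne r_2$; and $\mathbb{R}^n=\bigcup_{r\in\mathcal{I}}\partial\mathcal{R}(r)$,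 where $\partial\mathcal{R}(r)$ is the boundary of $\mathcal{R}(r)$. (A2) The map $R:\underline y\mapsto r$ whenever $\underline y\in\partial\mathcal{R}(r)$ induces a random variable $R$ with a probability density function $g(r)$. (A3) ${\rm Pr}\{E\mid\underline y\in\partial\mathcal{R}(r)\}\le f_u(r)$ for a computable function $f_u$. *)

theory Defs
  imports "HOL-Probability.Probability"
begin

text \<open>Codewords are binary vectors of length n (index type 'n), with True standing for bit 1.\<close>

definition zero_word :: "bool ^ 'n" where
  "zero_word = (\<chi> t. False)"

definition binary_linear_code :: "(bool ^ 'n) set \<Rightarrow> bool" where
  "binary_linear_code C \<longleftrightarrow> zero_word \<in> C \<and>
     (\<forall>a\<in>C. \<forall>b\<in>C. (\<chi> t. a $ t \<noteq> b $ t) \<in> C)"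

definition bpsk :: "bool ^ 'n \<Rightarrow> real ^ 'n" where
  "bpsk c = (\<chi> t. if c $ t then -1 else 1)"

text \<open>Distribution of the received vector y = s0 + z, z i.i.d. N(0, sigma^2), s0 = bpsk of zero word.\<close>
definition awgn_received :: "real \<Rightarrow> (real ^ 'n) measure" where
  "awgn_received \<sigma> = density lborel
     (\<lambda>y. ennreal (\<Prod>i\<in>UNIV. normal_density (bpsk (zero_word :: bool ^ 'n) $ i) \<sigma> (y $ i)))"

text \<open>ML decoding error event (ties counted as errors): some other codeword's signal
  vector is at least as close to y as the transmitted one.\<close>
definition ml_error_event :: "(bool ^ 'n) set \<Rightarrow> (real ^ 'n) set" where
  "ml_error_event C = {y. \<exists>c\<in>C. c \<noteq> zero_word \<and> dist y (bpsk c) \<le> dist y (bpsk zero_word)}"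

definition regions_A1 :: "real set \<Rightarrow> (real \<Rightarrow> (real ^ 'n) set) \<Rightarrow> bool" where
  "regions_A1 I Reg \<longleftrightarrow>
     (\<forall>r1\<in>I. \<forall>r2\<in>I. r1 < r2 \<longrightarrow> Reg r1 \<subset> Reg r2) \<and>
     (\<forall>r1\<in>I. \<forall>r2\<in>I. r1 \<noteq> r2 \<longrightarrow> frontier (Reg r1) \<inter> frontier (Reg r2) = {}) \<and>
     UNIV = (\<Union>r\<in>I. frontier (Reg r))"

definition region_index :: "real set \<Rightarrow> (real \<Rightarrow> (real ^ 'n) set) \<Rightarrow> real ^ 'n \<Rightarrow> real" where
  "region_index I Reg y = (THE r. r \<in> I \<and> y \<in> frontier (Reg r))"

text \<open>h is a version of the conditional probability Pr{A | X = r}: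
  Pr{A, X \<in> B} = \<integral>_B h dP_X for all Borel B (with values in [0,1]).\<close>
definition cond_prob_version ::
  "'a measure \<Rightarrow> ('a \<Rightarrow> real) \<Rightarrow> 'a set \<Rightarrow> (real \<Rightarrow> real) \<Rightarrow> bool" where
  "cond_prob_version M X A h \<longleftrightarrow>
     h \<in> borel_measurable borel \<and> (\<forall>r. 0 \<le> h r \<and> h r \<le> 1) \<and>
     (\<forall>B\<in>sets borel. emeasure M (A \<inter> X -` B \<inter> space M)
                        = (\<integral>\<^sup>+ r\<in>B. ennreal (h r) \<partial>(distr M borel X)))"

end

theory Submission
  imports Defs
begin

text \<open>Conditioning on R gives Pr{E} = \<integral> h g for a version h of Pr{E | R = r}. Below r* the
  integrand is bounded by f_u g (assumption A3), above r* by g since h \<le> 1. Nothing about the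
  code, the channel or assumption A1 is needed beyond the existence of g and h.\<close>

lemma emeasure_eq_nn_integral_cond_prob_density:
  assumes h: "cond_prob_version M X A h"
    and X: "distributed M lborel X (\<lambda>r. ennreal (g r))"
  shows "emeasure M (A \<inter> space M) = (\<integral>\<^sup>+ r. ennreal (g r) * ennreal (h r) \<partial>lborel)"
proof -
  have h_meas: "h \<in> borel_measurable borel"
    using h unfolding cond_prob_version_def by blast
  have "emeasure M (A \<inter> X -` UNIV \<inter> space M)
          = (\<integral>\<^sup>+ r\<in>UNIV. ennreal (h r) \<partial>(distr M borel X))"
    using h unfolding cond_prob_version_def by (auto dest: bspec[of _ _ UNIV])
  then have h_total: "emeasure M (A \<inter> space M) = (\<integral>\<^sup>+ r. ennreal (h r) \<partial>(distr M borel X))"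
    by simp
  have "distr M borel X = distr M lborel X"
    by (rule distr_cong) auto
  also have "\<dots> = density lborel (\<lambda>r. ennreal (g r))"
    using X by (simp add: distributed_def)
  finally have "emeasure M (A \<inter> space M) = (\<integral>\<^sup>+ r. ennreal (h r) \<partial>density lborel (\<lambda>r. ennreal (g r)))"
    using h_total by simp
  also have "\<dots> = (\<integral>\<^sup>+ r. ennreal (g r) * ennreal (h r) \<partial>lborel)"
    using distributed_borel_measurable[OF X] h_meas by (intro nn_integral_density) auto
  finally show ?thesis .
qed

lemma ennreal_mult_le_split_at:
  fixes g h f t r :: real
  assumes "0 \<le> g" "0 \<le> h" "h \<le> 1" "g \<noteq> 0 \<Longrightarrow> h \<le> f"
  shows "ennreal g * ennreal h
           \<le> ennreal (f * g) * indicator {..t} r + ennreal g * indicator {t..} r"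
proof (cases "r \<le> t")
  case True
  have "g * h \<le> f * g"
    using assms by (cases "g = 0") (auto simp: mult.commute mult_left_mono)
  then have "ennreal g * ennreal h \<le> ennreal (f * g)"
    using assms by (simp add: ennreal_mult[symmetric] ennreal_leI)
  then show ?thesis
    using True by (simp add: add_increasing2)
next
  case False
  have "ennreal g * ennreal h \<le> ennreal g"
    using assms by (simp add: ennreal_mult[symmetric] ennreal_leI mult_left_le)
  then show ?thesis
    using False by simp
qed

lemma emeasure_le_split_integral_cond_prob:
  assumes h: "cond_prob_version M X A h"
    and X: "distributed M lborel X (\<lambda>r. ennreal (g r))"
    and g_nonneg: "\<And>r. 0 \<le> g r"
    and h_le_f: "\<And>r. g r \<noteq> 0 \<Longrightarrow> h r \<le> f r"
    and f_meas: "f \<in> borel_measurable borel"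
  shows "emeasure M (A \<inter> space M)
           \<le> (\<integral>\<^sup>+ r\<in>{..t}. ennreal (f r * g r) \<partial>lborel) + (\<integral>\<^sup>+ r\<in>{t..}. ennreal (g r) \<partial>lborel)"
proof -
  have h01: "0 \<le> h r" "h r \<le> 1" for r
    using h unfolding cond_prob_version_def by auto
  have "(\<lambda>r. enn2real (ennreal (g r))) \<in> borel_measurable borel"
    using distributed_borel_measurable[OF X] by measurable
  then have g_meas: "g \<in> borel_measurable borel"
    using g_nonneg by simp
  have "emeasure M (A \<inter> space M) = (\<integral>\<^sup>+ r. ennreal (g r) * ennreal (h r) \<partial>lborel)"
    using h X by (rule emeasure_eq_nn_integral_cond_prob_density)
  also have "\<dots> \<le> (\<integral>\<^sup>+ r. ennreal (f r * g r) * indicator {..t} r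
                          + ennreal (g r) * indicator {t..} r \<partial>lborel)"
    using g_nonneg h01 h_le_f by (intro nn_integral_mono ennreal_mult_le_split_at)
  also have "\<dots> = (\<integral>\<^sup>+ r\<in>{..t}. ennreal (f r * g r) \<partial>lborel)
                  + (\<integral>\<^sup>+ r\<in>{t..}. ennreal (g r) \<partial>lborel)"
    using f_meas g_meas by (intro nn_integral_add) auto
  finally show ?thesis .
qed

theorem proposition1:
  fixes C :: "(bool ^ 'n) set" and \<sigma> :: real
    and I :: "real set" and Reg :: "real \<Rightarrow> (real ^ 'n) set"
    and g :: "real \<Rightarrow> real" and f_u :: "real \<Rightarrow> real" and r_star :: real
  assumes code: "binary_linear_code C"
    and sigma_pos: "\<sigma> > 0"
    and A1: "regions_A1 I Reg"
    and A2: "distributed (awgn_received \<sigma>) lborel (region_index I Reg) (\<lambda>r. ennreal (g r))"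
    and g_nonneg: "\<And>r. 0 \<le> g r"
    and g_ext: "\<And>r. r \<notin> I \<Longrightarrow> g r = 0"
    and f_meas: "f_u \<in> borel_measurable borel"
    and A3: "\<exists>h. cond_prob_version (awgn_received \<sigma>) (region_index I Reg) (ml_error_event C) h
               \<and> (\<forall>r\<in>I. h r \<le> f_u r)"
  shows "emeasure (awgn_received \<sigma>) (ml_error_event C)
           \<le> (\<integral>\<^sup>+ r\<in>{..r_star}. ennreal (f_u r * g r) \<partial>lborel)
             + (\<integral>\<^sup>+ r\<in>{r_star..}. ennreal (g r) \<partial>lborel)"
proof -
  obtain h where h: "cond_prob_version (awgn_received \<sigma>) (region_index I Reg) (ml_error_event C) h"
    and h_le_f: "\<forall>r\<in>I. h r \<le> f_u r"
    using A3 by blast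
  have "\<And>r. g r \<noteq> 0 \<Longrightarrow> h r \<le> f_u r"
    using h_le_f g_ext by blast
  from emeasure_le_split_integral_cond_prob[OF h A2 g_nonneg this f_meas]
  show ?thesis
    by (simp add: awgn_received_def)
qed

end
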